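(* Let $S\subseteq 2^E$ be a powerful set and $e\in E$. Then $|S/e|=|S|/2^{r_S(\{e\})}$. If moreover $e$ is deletable, then $|S\setminus e|=\frac12|S|$ if $e$ is a coloop of $S$, and $|S\setminus e|=|S|$ otherwise.
   Context: A set $S\subseteq 2^E$ ($E$ finite) is powerful if for every $X\subseteq E$ the number of members of $S$ contained in $X$ is a power of 2. Its rank function is $r_S(X)=\log_2\big(|S|/|\{Y\in S:Y\subseteq E\setminus X\}|\big)$. The contraction is $S/e=\{X\subseteq E\setminus\{e\}: X\in S\}$. Let $f$ be the $\{0,1\}$-valued indicator function of $S$ and $g(X)=f(X)+f(X\cup\{e\})$ for $X\subseteq E\setminus\{e\}$. The element $e$ is deletable if $\frac{1}{g(\emptyset)}g$ is $\{0,1\}$-valued (i.e. the multiset deletion of $e$ is, up to scaling, a powerful set); in that case $S\setminus e=\{X\subseteq E\setminus\{e\}: X\in S \text{ or } X\cup\{e\}\in S\}$. An element $e$ is a coloop of $S$ if there exists $T\subseteq 2^{E\setminus\{e\}}$ with $S=\{X,X\cup\{e\}:X\in T\}$. *)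

theory Defs
  imports Complex_Main
begin

definition powerful :: "'a set \<Rightarrow> 'a set set \<Rightarrow> bool" where
  "powerful E S \<longleftrightarrow> finite E \<and> S \<subseteq> Pow E \<and>
     (\<forall>X. X \<subseteq> E \<longrightarrow> (\<exists>k::nat. card {Y \<in> S. Y \<subseteq> X} = 2 ^ k))"

definition rank_ps :: "'a set \<Rightarrow> 'a set set \<Rightarrow> 'a set \<Rightarrow> real" where
  "rank_ps E S X = log 2 (real (card S) / real (card {Y \<in> S. Y \<subseteq> E - X}))"

definition contraction :: "'a set \<Rightarrow> 'a set set \<Rightarrow> 'a \<Rightarrow> 'a set set" where
  "contraction E S e = {X. X \<subseteq> E - {e} \<and> X \<in> S}"

text \<open>Indicator function of S and the multiset deletion g.\<close>
definition ind_ps :: "'a set set \<Rightarrow> 'a set \<Rightarrow> nat" where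
  "ind_ps S X = (if X \<in> S then 1 else 0)"

definition del_g :: "'a set set \<Rightarrow> 'a \<Rightarrow> 'a set \<Rightarrow> nat" where
  "del_g S e X = ind_ps S X + ind_ps S (X \<union> {e})"

definition deletable :: "'a set \<Rightarrow> 'a set set \<Rightarrow> 'a \<Rightarrow> bool" where
  "deletable E S e \<longleftrightarrow>
     (\<forall>X. X \<subseteq> E - {e} \<longrightarrow>
        real (del_g S e X) / real (del_g S e {}) \<in> {0, 1})"

definition deletion :: "'a set \<Rightarrow> 'a set set \<Rightarrow> 'a \<Rightarrow> 'a set set" where
  "deletion E S e = {X. X \<subseteq> E - {e} \<and> (X \<in> S \<or> X \<union> {e} \<in> S)}"

definition coloop :: "'a set \<Rightarrow> 'a set set \<Rightarrow> 'a \<Rightarrow> bool" where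
  "coloop E S e \<longleftrightarrow> (\<exists>T. T \<subseteq> Pow (E - {e}) \<and>
      S = {Z. \<exists>X\<in>T. Z = X \<or> Z = X \<union> {e}})"

end

theory Submission
  imports Defs
begin

text \<open>Since \<open>S\<close> has a power-of-two, hence nonzero, number of members inside \<open>{}\<close>, it
  contains \<open>{}\<close>; this makes all denominators positive and forces \<open>g({}) \<in> {1, 2}\<close>.
  Deletability then says that \<open>g\<close> takes only the values \<open>0\<close> and \<open>g({})\<close>. If \<open>g({}) = 1\<close>,
  no two members of \<open>S\<close> differ only in \<open>e\<close>, so \<open>Y \<mapsto> Y - {e}\<close> maps \<open>S\<close> bijectively
  onto \<open>S \<setminus> e\<close>. If \<open>g({}) = 2\<close>, the members of \<open>S\<close> come in pairs \<open>X, X \<union> {e}\<close>, which is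
  exactly the statement that \<open>e\<close> is a coloop, and the map is two-to-one.\<close>

lemma powerful_empty_mem:
  assumes "powerful E S"
  shows "{} \<in> S"
proof -
  obtain k :: nat where "card {Y \<in> S. Y \<subseteq> {}} = 2 ^ k"
    using assms unfolding powerful_def by blast
  then have "{Y \<in> S. Y \<subseteq> {}} \<noteq> {}"
    by (metis card.empty power_not_zero zero_neq_numeral)
  then show ?thesis
    by auto
qed

lemma card_avoiding_rank_ps:
  assumes "finite S" and "{} \<in> S"
  shows "real (card {Y \<in> S. Y \<subseteq> E - X}) = real (card S) / 2 powr rank_ps E S X"
proof -
  have "card {Y \<in> S. Y \<subseteq> E - X} > 0" and "card S > 0"
    using assms by (auto simp: card_gt_0_iff)
  then show ?thesis
    unfolding rank_ps_def by simp
qed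

lemma deletion_eq_image:
  assumes "S \<subseteq> Pow E"
  shows "deletion E S e = (\<lambda>Y. Y - {e}) ` S"
proof (intro equalityI subsetI)
  fix X
  assume "X \<in> deletion E S e"
  then have "X = X - {e} \<and> X \<in> S \<or> X = insert e X - {e} \<and> insert e X \<in> S"
    unfolding deletion_def by auto
  then show "X \<in> (\<lambda>Y. Y - {e}) ` S"
    by blast
next
  fix X
  assume "X \<in> (\<lambda>Y. Y - {e}) ` S"
  then obtain Y where "Y \<in> S" and "X = Y - {e}"
    by blast
  moreover have "Y = X \<or> Y = insert e X"
    using \<open>X = Y - {e}\<close> by blast
  ultimately show "X \<in> deletion E S e"
    using assms unfolding deletion_def by auto
qed

lemma coloop_iff_union:
  "coloop E S e \<longleftrightarrow> (\<exists>T \<subseteq> Pow (E - {e}). S = T \<union> insert e ` T)"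
proof -
  have "{Z. \<exists>X\<in>T. Z = X \<or> Z = X \<union> {e}} = T \<union> insert e ` T" for T
    by auto
  then show ?thesis
    unfolding coloop_def by auto
qed

lemma coloop_iff:
  assumes "S \<subseteq> Pow E"
  shows "coloop E S e \<longleftrightarrow> (\<forall>X \<subseteq> E - {e}. X \<in> S \<longleftrightarrow> insert e X \<in> S)"
proof
  assume "coloop E S e"
  then obtain T where T: "T \<subseteq> Pow (E - {e})" and S: "S = T \<union> insert e ` T"
    unfolding coloop_iff_union by blast
  show "\<forall>X \<subseteq> E - {e}. X \<in> S \<longleftrightarrow> insert e X \<in> S"
  proof (intro allI impI)
    fix X
    assume X: "X \<subseteq> E - {e}"
    have "X' = X" if "X' \<in> T" and "insert e X' = insert e X" for X'
      using that T X by (metis Diff_insert_absorb PowD subset_Diff_insert)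
    then show "X \<in> S \<longleftrightarrow> insert e X \<in> S"
      using S T X by auto
  qed
next
  assume pairs: "\<forall>X \<subseteq> E - {e}. X \<in> S \<longleftrightarrow> insert e X \<in> S"
  define T where "T = {Y \<in> S. e \<notin> Y}"
  have T_sub: "T \<subseteq> Pow (E - {e})"
    using assms unfolding T_def by auto
  have "S \<subseteq> T \<union> insert e ` T"
  proof
    fix Y
    assume "Y \<in> S"
    show "Y \<in> T \<union> insert e ` T"
    proof (cases "e \<in> Y")
      case True
      have "Y - {e} \<subseteq> E - {e}"
        using \<open>Y \<in> S\<close> assms by auto
      then have "Y - {e} \<in> T"
        using \<open>Y \<in> S\<close> pairs True unfolding T_def by (simp add: insert_absorb)
      then show ?thesis
        using True by (metis UnI2 image_eqI insert_Diff)
    qed (use \<open>Y \<in> S\<close> in \<open>simp add: T_def\<close>)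
  qed
  moreover have "insert e ` T \<subseteq> S"
    using T_sub pairs unfolding T_def by auto
  moreover have "T \<subseteq> S"
    unfolding T_def by blast
  ultimately have "S = T \<union> insert e ` T"
    by blast
  then show "coloop E S e"
    unfolding coloop_iff_union using T_sub by blast
qed

lemma card_deletion_coloop:
  assumes "finite E" and "coloop E S e"
  shows "2 * card (deletion E S e) = card S"
proof -
  obtain T where T: "T \<subseteq> Pow (E - {e})" and S: "S = T \<union> insert e ` T"
    using assms(2) unfolding coloop_iff_union by blast
  have "finite T"
    using T assms(1) by (simp add: finite_subset)
  have "T \<inter> insert e ` T = {}" and "inj_on (insert e) T"
    using T by (auto simp: inj_on_def)
  then have "card S = 2 * card T"
    using \<open>finite T\<close> S by (simp add: card_Un_disjoint card_image)
  moreover have "deletion E S e = T"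
  proof -
    have "X \<in> T" if "X \<subseteq> E - {e}" and "insert e X = insert e X'" and "X' \<in> T" for X X'
    proof -
      have "e \<notin> X" and "e \<notin> X'"
        using that T by auto
      then show ?thesis
        using that by (simp add: insert_ident)
    qed
    then show ?thesis
      using T S unfolding deletion_def by auto
  qed
  ultimately show ?thesis
    by simp
qed

lemma deletable_cases:
  assumes "deletable E S e" and "{} \<in> S"
  obtains "\<forall>X \<subseteq> E - {e}. X \<in> S \<longleftrightarrow> insert e X \<in> S"
    | "\<forall>X \<subseteq> E - {e}. \<not> (X \<in> S \<and> insert e X \<in> S)"
proof -
  have g: "real (del_g S e X) / real (del_g S e {}) \<in> {0, 1}" if "X \<subseteq> E - {e}" for X
    using assms(1) that unfolding deletable_def by blast
  have "del_g S e {} = 1 \<or> del_g S e {} = 2"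
    using assms(2) unfolding del_g_def ind_ps_def by auto
  then show ?thesis
  proof
    assume "del_g S e {} = 1"
    then have g_le: "del_g S e X \<le> 1" if "X \<subseteq> E - {e}" for X
      using g[OF that] by auto
    have "\<not> (X \<in> S \<and> insert e X \<in> S)" if "X \<subseteq> E - {e}" for X
      using g_le[OF that] unfolding del_g_def ind_ps_def by auto
    then show ?thesis
      using that(2) by blast
  next
    assume "del_g S e {} = 2"
    then have g_even: "del_g S e X \<in> {0, 2}" if "X \<subseteq> E - {e}" for X
      using g[OF that] by auto
    have "X \<in> S \<longleftrightarrow> insert e X \<in> S" if "X \<subseteq> E - {e}" for X
      using g_even[OF that] unfolding del_g_def ind_ps_def by (auto split: if_splits)
    then show ?thesis
      using that(1) by blast
  qed
qed

lemma inj_on_Diff_singleton_if_unpaired: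
  assumes "S \<subseteq> Pow E" and "\<forall>X \<subseteq> E - {e}. \<not> (X \<in> S \<and> insert e X \<in> S)"
  shows "inj_on (\<lambda>Y. Y - {e}) S"
proof (rule inj_onI)
  fix Y Z
  assume "Y \<in> S" "Z \<in> S" and eq: "Y - {e} = Z - {e}"
  show "Y = Z"
  proof (rule ccontr)
    assume "Y \<noteq> Z"
    then have "Y = insert e (Z - {e}) \<and> Z = Z - {e} \<or> Z = insert e (Y - {e}) \<and> Y = Y - {e}"
      using eq by blast
    then show False
      using assms \<open>Y \<in> S\<close> \<open>Z \<in> S\<close> by (metis Diff_mono PowD subset_refl subsetD)
  qed
qed

theorem proposition4:
  fixes E :: "'a set" and S :: "'a set set" and e :: 'a
  assumes "powerful E S" and "e \<in> E"
  shows "real (card (contraction E S e)) = real (card S) / 2 powr (rank_ps E S {e}) \<and>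
         (deletable E S e \<longrightarrow>
           (coloop E S e \<longrightarrow> real (card (deletion E S e)) = real (card S) / 2) \<and>
           (\<not> coloop E S e \<longrightarrow> card (deletion E S e) = card S))"
proof -
  have "finite E" and SE: "S \<subseteq> Pow E"
    using assms(1) unfolding powerful_def by auto
  then have "finite S"
    by (meson finite_Pow_iff finite_subset)
  have "{} \<in> S"
    using assms(1) by (rule powerful_empty_mem)
  have "contraction E S e = {Y \<in> S. Y \<subseteq> E - {e}}"
    unfolding contraction_def by auto
  then have contraction: "real (card (contraction E S e)) = real (card S) / 2 powr rank_ps E S {e}"
    using card_avoiding_rank_ps[OF \<open>finite S\<close> \<open>{} \<in> S\<close>] by simp
  have coloop: "real (card (deletion E S e)) = real (card S) / 2" if "coloop E S e"
    using card_deletion_coloop[OF \<open>finite E\<close> that] by linarith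
  have non_coloop: "card (deletion E S e) = card S"
    if "deletable E S e" and "\<not> coloop E S e"
  proof -
    have "\<forall>X \<subseteq> E - {e}. \<not> (X \<in> S \<and> insert e X \<in> S)"
    proof (rule deletable_cases[OF that(1) \<open>{} \<in> S\<close>])
      assume "\<forall>X \<subseteq> E - {e}. X \<in> S \<longleftrightarrow> insert e X \<in> S"
      then have "coloop E S e"
        unfolding coloop_iff[OF SE] .
      with that(2) show ?thesis
        by contradiction
    qed
    then have "inj_on (\<lambda>Y. Y - {e}) S"
      by (rule inj_on_Diff_singleton_if_unpaired[OF SE])
    then show ?thesis
      unfolding deletion_eq_image[OF SE] by (rule card_image)
  qed
  show ?thesis
    using contraction coloop non_coloop by blast
qed

end
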